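(* Let $X$ be a finite set, let $N$ be a rooted phylogenetic network on $X$, and let $\widetilde{N}$ be its normalisation. Then: (i) $\widetilde{N}$ is a normal network on $X$; moreover $\widetilde{N}=N$ (up to isomorphism fixing each leaf) if and only if $N$ is a normal network; and the normalisation map $\varphi: N\mapsto \widetilde{N}$ is idempotent, i.e. $\widetilde{\widetilde{N}}=\widetilde{N}$. (ii) For any two vertices $u,v$ of $\widetilde{N}$, there is a directed path from $u$ to $v$ in $\widetilde{N}$ if and only if there is a directed path from $u$ to $v$ in $N$. (iii) For every vertex $v$ of $\widetilde{N}$, the cluster $C_{\widetilde{N}}(v)$ equals the cluster $C_N(v)$. (iv) $\widetilde{N}$ is a tree if and only if the collection $\{C_N(v): v\in V_{\rm vis}(N)\}$ is a hierarchy on $X$.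
   Context: A rooted phylogenetic network on a finite set $X$ is a finite acyclic directed graph $N$ with a single vertex of in-degree $0$ (the root $\rho$), all other vertices being of one of three types: (1) in-degree $1$ and out-degree $0$ (the leaves, which form exactly the set $X$); (2) in-degree $1$ and out-degree at least $2$; (3) out-degree $1$ and in-degree at least $2$ (reticulate vertices). Two networks are identified if there is a digraph isomorphism between them mapping each leaf $x$ to leaf $x$. A network is a tree if it has no reticulate vertices. A vertex $v$ of $N$ is visible if there is a leaf $x\in X$ such that every directed path from $\rho$ to $x$ passes through $v$; the root and all leaves are visible. Let $V_{\rm vis}(N)$ be the set of visible vertices. A network is tree-child if every vertex is visible. A shortcut is an arc $(u,v)$ such that there is also a directed path of length at least $2$ from $u$ to $v$. A network is normal if it is tree-child and has no shortcuts. For a vertex $v$, the cluster $C_N(v)$ is the set of leaves $x\in X$ such that there is a directed path (possibly of length $0$) from $v$ to $x$ in $N$. A hierarchy on $X$ is a collection of subsets of $X$ any two of which are either disjoint or nested (one contains the other). Define the directed graph ${\rm Cov}(N)$ with vertex set $V_{\rm vis}(N)$ as follows: for each pair $u\neq v$ of visible vertices such that $N$ has a directed path from $u$ to $v$, put an arc $(u,v)$; then delete every shortcut arc of this graph (so ${\rm Cov}(N)$ is the Hasse diagram of the reachability partial order on $V_{\rm vis}(N)$). A vertex is subdividing if its in-degree and out-degree are both $1$. The normalisation $\widetilde{N}$ of $N$ is the directed graph obtained from ${\rm Cov}(N)$ by suppressing every subdividing vertex (i.e. replacing each maximal path whose interior vertices are subdividing by a single arc between its endpoints); its vertex set is a subset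 of $V_{\rm vis}(N)$. *)

theory Defs
  imports Main
begin

text \<open>A directed graph on vertex type 'v is given by a vertex set V and an arc set A.
  The leaves of a network on X are the elements of X themselves (X is a subset of V).\<close>

definition is_path :: "('v \<times> 'v) set \<Rightarrow> 'v list \<Rightarrow> 'v \<Rightarrow> 'v \<Rightarrow> bool" where
  "is_path A p u v \<longleftrightarrow> p \<noteq> [] \<and> hd p = u \<and> last p = v \<and>
     (\<forall>i. Suc i < length p \<longrightarrow> (p ! i, p ! Suc i) \<in> A)"

definition reach :: "('v \<times> 'v) set \<Rightarrow> 'v \<Rightarrow> 'v \<Rightarrow> bool" where
  "reach A u v \<longleftrightarrow> (\<exists>p. is_path A p u v)"

definition indeg :: "('v \<times> 'v) set \<Rightarrow> 'v \<Rightarrow> nat" where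
  "indeg A v = card {u. (u, v) \<in> A}"

definition outdeg :: "('v \<times> 'v) set \<Rightarrow> 'v \<Rightarrow> nat" where
  "outdeg A v = card {w. (v, w) \<in> A}"

definition root :: "'v set \<Rightarrow> ('v \<times> 'v) set \<Rightarrow> 'v" where
  "root V A = (THE r. r \<in> V \<and> indeg A r = 0)"

definition phylo_network :: "'v set \<Rightarrow> 'v set \<Rightarrow> ('v \<times> 'v) set \<Rightarrow> bool" where
  "phylo_network X V A \<longleftrightarrow>
     finite V \<and> A \<subseteq> V \<times> V \<and>
     (\<forall>v p. is_path A p v v \<longrightarrow> length p = 1) \<and>
     (\<exists>!r. r \<in> V \<and> indeg A r = 0) \<and>
     (\<forall>v\<in>V. indeg A v \<noteq> 0 \<longrightarrow>
        (indeg A v = 1 \<and> outdeg A v = 0) \<or>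
        (indeg A v = 1 \<and> outdeg A v \<ge> 2) \<or>
        (outdeg A v = 1 \<and> indeg A v \<ge> 2)) \<and>
     X = {v \<in> V. indeg A v = 1 \<and> outdeg A v = 0}"

definition visible :: "'v set \<Rightarrow> 'v set \<Rightarrow> ('v \<times> 'v) set \<Rightarrow> 'v \<Rightarrow> bool" where
  "visible X V A v \<longleftrightarrow> v \<in> V \<and>
     (v = root V A \<or> v \<in> X \<or>
      (\<exists>x\<in>X. \<forall>p. is_path A p (root V A) x \<longrightarrow> v \<in> set p))"

definition Vvis :: "'v set \<Rightarrow> 'v set \<Rightarrow> ('v \<times> 'v) set \<Rightarrow> 'v set" where
  "Vvis X V A = {v. visible X V A v}"

definition tree_child :: "'v set \<Rightarrow> 'v set \<Rightarrow> ('v \<times> 'v) set \<Rightarrow> bool" where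
  "tree_child X V A \<longleftrightarrow> (\<forall>v\<in>V. visible X V A v)"

definition shortcut :: "('v \<times> 'v) set \<Rightarrow> 'v \<Rightarrow> 'v \<Rightarrow> bool" where
  "shortcut A u v \<longleftrightarrow> (u, v) \<in> A \<and> (\<exists>p. is_path A p u v \<and> length p \<ge> 3)"

definition normal :: "'v set \<Rightarrow> 'v set \<Rightarrow> ('v \<times> 'v) set \<Rightarrow> bool" where
  "normal X V A \<longleftrightarrow> phylo_network X V A \<and> tree_child X V A \<and> (\<forall>u v. \<not> shortcut A u v)"

definition reticulate :: "'v set \<Rightarrow> ('v \<times> 'v) set \<Rightarrow> 'v \<Rightarrow> bool" where
  "reticulate V A v \<longleftrightarrow> v \<in> V \<and> outdeg A v = 1 \<and> indeg A v \<ge> 2"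

definition is_tree :: "'v set \<Rightarrow> ('v \<times> 'v) set \<Rightarrow> bool" where
  "is_tree V A \<longleftrightarrow> (\<forall>v\<in>V. \<not> reticulate V A v)"

definition cluster :: "'v set \<Rightarrow> ('v \<times> 'v) set \<Rightarrow> 'v \<Rightarrow> 'v set" where
  "cluster X A v = {x \<in> X. reach A v x}"

definition hierarchy :: "'a set set \<Rightarrow> bool" where
  "hierarchy H \<longleftrightarrow> (\<forall>S\<in>H. \<forall>T\<in>H. S \<inter> T = {} \<or> S \<subseteq> T \<or> T \<subseteq> S)"

text \<open>Cov(N): Hasse diagram of reachability on visible vertices\<close>
definition cov_A :: "'v set \<Rightarrow> 'v set \<Rightarrow> ('v \<times> 'v) set \<Rightarrow> ('v \<times> 'v) set" where
  "cov_A X V A =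
     (let R = {(u, v). u \<in> Vvis X V A \<and> v \<in> Vvis X V A \<and> u \<noteq> v \<and> reach A u v}
      in {(u, v) \<in> R. \<not> shortcut R u v})"

definition subdividing :: "('v \<times> 'v) set \<Rightarrow> 'v \<Rightarrow> bool" where
  "subdividing A v \<longleftrightarrow> indeg A v = 1 \<and> outdeg A v = 1"

text \<open>normalisation: suppress all subdividing vertices of Cov(N)\<close>
definition norm_V :: "'v set \<Rightarrow> 'v set \<Rightarrow> ('v \<times> 'v) set \<Rightarrow> 'v set" where
  "norm_V X V A = {v \<in> Vvis X V A. \<not> subdividing (cov_A X V A) v}"

definition norm_A :: "'v set \<Rightarrow> 'v set \<Rightarrow> ('v \<times> 'v) set \<Rightarrow> ('v \<times> 'v) set" where
  "norm_A X V A =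
     {(u, w). u \<in> norm_V X V A \<and> w \<in> norm_V X V A \<and>
        (\<exists>p. is_path (cov_A X V A) p u w \<and> length p \<ge> 2 \<and>
           (\<forall>i. 0 < i \<and> i < length p - 1 \<longrightarrow> subdividing (cov_A X V A) (p ! i)))}"

definition iso_fix :: "'v set \<Rightarrow> 'v set \<Rightarrow> ('v \<times> 'v) set \<Rightarrow> 'v set \<Rightarrow> ('v \<times> 'v) set \<Rightarrow> bool" where
  "iso_fix X V A V' A' \<longleftrightarrow>
     (\<exists>f. bij_betw f V V' \<and> (\<forall>u\<in>V. \<forall>w\<in>V. (u, w) \<in> A \<longleftrightarrow> (f u, f w) \<in> A') \<and>
          (\<forall>x\<in>X. f x = x))"

end

theory Submission
  imports Defs
begin

text \<open>
  A vertex v dominates a leaf x if every path from the root to x passes through v; the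
  visible vertices are the root and the dominators of leaves. Cov(N) is the Hasse diagram
  of reachability on the visible vertices, so it has the same reachability there and no
  shortcuts.

  The central observation is that a subdividing vertex of Cov(N) dominates its unique
  child and is therefore the only parent of that child. Hence the chains of subdividing
  vertices are disjoint, suppressing them preserves the in- and out-degrees of the
  remaining vertices, and no remaining vertex lies strictly between the ends of a new arc.
  So the normalisation is a phylogenetic network without shortcuts; it is tree-child
  because domination of a leaf survives the suppression, and it has the same reachability
  and clusters as N.

  A normal network coincides with its cover graph, so normalisation fixes it. Conversely,
  an isomorphism between N and its normalisation preserves the numbers of vertices and
  arcs, which forces every vertex to be visible and Cov(N) = N. Finally, the clusters of a
  tree form a hierarchy, while in a normal network the two parents of a reticulation are
  incomparable and each has a leaf below it that the other lacks.
\<close>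

section \<open>Paths, reachability and avoidance\<close>

lemma is_path_Nil [simp]: "\<not> is_path B [] u v"
  by (simp add: is_path_def)

lemma is_path_singleton [simp]: "is_path B [x] u v \<longleftrightarrow> x = u \<and> x = v"
  by (auto simp: is_path_def)

lemma is_path_Cons_Cons [simp]:
  "is_path B (x # y # p) u v \<longleftrightarrow> x = u \<and> (x, y) \<in> B \<and> is_path B (y # p) y v"
  by (auto simp: is_path_def nth_Cons split: nat.splits)

lemma is_path_ConsE: "is_path B p u v \<Longrightarrow> \<exists>q. p = u # q"
  by (cases p) (auto simp: is_path_def)

lemma is_path_ConsI: "(u, m) \<in> B \<Longrightarrow> is_path B p m v \<Longrightarrow> is_path B (u # p) u v"
  by (metis is_path_Cons_Cons is_path_ConsE)

lemma is_path_mono: "is_path B p u v \<Longrightarrow> B \<subseteq> B' \<Longrightarrow> is_path B' p u v"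
  by (auto simp: is_path_def)

lemma is_path_imp_rtrancl: "is_path B p u v \<Longrightarrow> (u, v) \<in> (B \<inter> set p \<times> set p)\<^sup>*"
proof (induction p arbitrary: u)
  case (Cons x p)
  show ?case
  proof (cases p)
    case (Cons y q)
    with Cons.prems have "(u, y) \<in> B \<inter> set (x # p) \<times> set (x # p)" "is_path B p y v"
      by auto
    moreover have "(B \<inter> set p \<times> set p)\<^sup>* \<subseteq> (B \<inter> set (x # p) \<times> set (x # p))\<^sup>*"
      by (rule rtrancl_mono) auto
    ultimately show ?thesis
      using Cons.IH by (blast intro: converse_rtrancl_into_rtrancl)
  qed (use Cons.prems in auto)
qed simp

lemma rtrancl_imp_is_path:
  "(u, v) \<in> B\<^sup>* \<Longrightarrow> \<exists>p. is_path B p u v \<and> set p \<subseteq> insert u (Range B)"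
proof (induction rule: converse_rtrancl_induct)
  case base
  show ?case by (intro exI[of _ "[v]"]) simp
next
  case (step u m)
  then obtain p where "is_path B p m v" "set p \<subseteq> insert m (Range B)" by blast
  with step.hyps(1) show ?case by (intro exI[of _ "u # p"]) (auto intro: is_path_ConsI)
qed

lemma is_path_rtrancl: "is_path B p u v \<Longrightarrow> (u, v) \<in> B\<^sup>*"
  using is_path_imp_rtrancl by (rule subsetD[OF rtrancl_mono[OF Int_lower1]])

lemma reach_iff_rtrancl: "reach B u v \<longleftrightarrow> (u, v) \<in> B\<^sup>*"
  unfolding reach_def by (metis is_path_rtrancl rtrancl_imp_is_path)

lemma two_le_length_iff: "2 \<le> length p \<longleftrightarrow> (\<exists>x y q. p = x # y # q)"
  by (auto simp: numeral_2_eq_2 Suc_le_length_iff)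

lemma trancl_iff_is_path: "(u, v) \<in> B\<^sup>+ \<longleftrightarrow> (\<exists>p. is_path B p u v \<and> 2 \<le> length p)"
proof
  assume "(u, v) \<in> B\<^sup>+"
  then obtain m where "(u, m) \<in> B" "(m, v) \<in> B\<^sup>*" by (meson tranclD)
  moreover obtain p where "is_path B p m v"
    using \<open>(m, v) \<in> B\<^sup>*\<close> by (meson rtrancl_imp_is_path)
  moreover obtain q where "p = m # q"
    using is_path_ConsE[OF \<open>is_path B p m v\<close>] by blast
  ultimately have "is_path B (u # p) u v" "2 \<le> length (u # p)"
    using is_path_ConsI[of u m B p v] by auto
  then show "\<exists>p. is_path B p u v \<and> 2 \<le> length p" by blast
next
  assume "\<exists>p. is_path B p u v \<and> 2 \<le> length p"
  then obtain x y q where "is_path B (x # y # q) u v"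
    by (auto simp: two_le_length_iff)
  then have "(u, y) \<in> B" "(y, v) \<in> B\<^sup>*"
    using is_path_rtrancl by auto
  then show "(u, v) \<in> B\<^sup>+"
    by (rule rtrancl_into_trancl2)
qed

lemma shortcut_iff: "shortcut B u v \<longleftrightarrow> (u, v) \<in> B \<and> (u, v) \<in> B O B\<^sup>+"
proof -
  have "(\<exists>p. is_path B p u v \<and> 3 \<le> length p) \<longleftrightarrow> (u, v) \<in> B O B\<^sup>+"
  proof
    assume "\<exists>p. is_path B p u v \<and> 3 \<le> length p"
    then obtain x p where "is_path B (x # p) u v" "2 \<le> length p"
      by (metis Suc_le_length_iff eval_nat_numeral(3))
    moreover from this obtain y q where "p = y # q"
      by (meson two_le_length_iff)
    ultimately have "(u, y) \<in> B" and yv: "is_path B p y v \<and> 2 \<le> length p"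
      by auto
    moreover have "(y, v) \<in> B\<^sup>+"
      unfolding trancl_iff_is_path using yv by blast
    ultimately show "(u, v) \<in> B O B\<^sup>+" by blast
  next
    assume "(u, v) \<in> B O B\<^sup>+"
    then obtain m where "(u, m) \<in> B" "(m, v) \<in> B\<^sup>+" by blast
    moreover from this obtain p where "is_path B p m v" "2 \<le> length p"
      unfolding trancl_iff_is_path by blast
    ultimately have "is_path B (u # p) u v" "3 \<le> length (u # p)"
      using is_path_ConsI[of u m B p v] by auto
    then show "\<exists>p. is_path B p u v \<and> 3 \<le> length p" by blast
  qed
  then show ?thesis
    unfolding shortcut_def by blast
qed

definition avoiding :: "('v \<times> 'v) set \<Rightarrow> 'v \<Rightarrow> ('v \<times> 'v) set" where
  "avoiding B w = {(s, t) \<in> B. s \<noteq> w \<and> t \<noteq> w}"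

lemma avoiding_subset: "avoiding B w \<subseteq> B"
  by (auto simp: avoiding_def)

lemma avoiding_mono: "B \<subseteq> B' \<Longrightarrow> avoiding B w \<subseteq> avoiding B' w"
  by (auto simp: avoiding_def)

lemma avoiding_rtrancl_iff:
  assumes "u \<noteq> w"
  shows "(u, v) \<in> (avoiding B w)\<^sup>* \<longleftrightarrow> (\<exists>p. is_path B p u v \<and> w \<notin> set p)"
proof
  assume "(u, v) \<in> (avoiding B w)\<^sup>*"
  then obtain p where p: "is_path (avoiding B w) p u v" "set p \<subseteq> insert u (Range (avoiding B w))"
    by (meson rtrancl_imp_is_path)
  moreover have "w \<notin> Range (avoiding B w)"
    unfolding avoiding_def by blast
  ultimately have "w \<notin> set p"
    using assms by blast
  moreover have "is_path B p u v"
    using p(1) avoiding_subset by (rule is_path_mono)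
  ultimately show "\<exists>p. is_path B p u v \<and> w \<notin> set p" by blast
next
  assume "\<exists>p. is_path B p u v \<and> w \<notin> set p"
  then obtain p where p: "is_path B p u v" "w \<notin> set p" by blast
  from p(1) have "(u, v) \<in> (B \<inter> set p \<times> set p)\<^sup>*" by (rule is_path_imp_rtrancl)
  moreover have "B \<inter> set p \<times> set p \<subseteq> avoiding B w"
    using p(2) by (auto simp: avoiding_def)
  ultimately show "(u, v) \<in> (avoiding B w)\<^sup>*"
    by (meson rtrancl_mono subsetD)
qed

lemma rtrancl_avoidingI:
  "(u, v) \<in> B\<^sup>* \<Longrightarrow> \<not> ((u, w) \<in> B\<^sup>* \<and> (w, v) \<in> B\<^sup>*) \<Longrightarrow> (u, v) \<in> (avoiding B w)\<^sup>*"
proof (induction rule: rtrancl_induct)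
  case (step m v)
  have "m \<noteq> w" "v \<noteq> w" "\<not> ((u, w) \<in> B\<^sup>* \<and> (w, m) \<in> B\<^sup>*)"
    using step.hyps step.prems by (auto intro: rtrancl_into_rtrancl)
  then have "(u, m) \<in> (avoiding B w)\<^sup>*" "(m, v) \<in> avoiding B w"
    using step.IH step.hyps(2) by (auto simp: avoiding_def)
  then show ?case by (rule rtrancl_into_rtrancl)
qed simp

lemma interior_conv_butlast:
  "(\<forall>i. 0 < i \<and> i < length (u # p) - 1 \<longrightarrow> P ((u # p) ! i)) \<longleftrightarrow> (\<forall>z\<in>set (butlast p). P z)"
proof -
  have "(\<forall>i. 0 < i \<and> i < length (u # p) - 1 \<longrightarrow> P ((u # p) ! i)) \<longleftrightarrow>
      (\<forall>j. j < length p - 1 \<longrightarrow> P (p ! j))"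
  proof (intro iffI allI impI)
    fix j
    assume "\<forall>i. 0 < i \<and> i < length (u # p) - 1 \<longrightarrow> P ((u # p) ! i)" "j < length p - 1"
    then show "P (p ! j)" by (auto dest: spec[of _ "Suc j"])
  next
    fix i
    assume "\<forall>j. j < length p - 1 \<longrightarrow> P (p ! j)" "0 < i \<and> i < length (u # p) - 1"
    then show "P ((u # p) ! i)" by (cases i) auto
  qed
  also have "\<dots> \<longleftrightarrow> (\<forall>z\<in>set (butlast p). P z)"
    by (simp add: all_set_conv_all_nth nth_butlast)
  finally show ?thesis .
qed

lemma is_path_interior_imp:
  "is_path C (u # p) u w \<Longrightarrow> p \<noteq> [] \<Longrightarrow> \<forall>z\<in>set (butlast p). P z \<Longrightarrow>
    (u, w) \<in> {(a, b) \<in> C. P b}\<^sup>* O C"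
proof (induction p arbitrary: u)
  case (Cons y q)
  show ?case
  proof (cases q)
    case Nil
    with Cons.prems(1) show ?thesis by auto
  next
    case (Cons z r)
    with Cons.prems have "(u, y) \<in> {(a, b) \<in> C. P b}" "is_path C (y # q) y w"
      "\<forall>z\<in>set (butlast q). P z"
      by auto
    with Cons.IH[of y] \<open>q = z # r\<close> show ?thesis
      by (auto intro: relcompI converse_rtrancl_into_rtrancl)
  qed
qed simp

lemma interior_imp_is_path:
  "(u, m) \<in> {(a, b) \<in> C. P b}\<^sup>* \<Longrightarrow> (m, w) \<in> C \<Longrightarrow>
    \<exists>p. is_path C (u # p) u w \<and> p \<noteq> [] \<and> (\<forall>z\<in>set (butlast p). P z)"
proof (induction rule: converse_rtrancl_induct)
  case base
  then show ?case by (intro exI[of _ "[w]"]) simp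
next
  case (step u u')
  then obtain p where "is_path C (u' # p) u' w" "p \<noteq> []" "\<forall>z\<in>set (butlast p). P z"
    by blast
  with step.hyps(1) show ?case
    by (intro exI[of _ "u' # p"]) auto
qed

lemma interior_path_iff:
  "(\<exists>p. is_path C p u w \<and> 2 \<le> length p \<and> (\<forall>i. 0 < i \<and> i < length p - 1 \<longrightarrow> P (p ! i)))
    \<longleftrightarrow> (u, w) \<in> {(a, b) \<in> C. P b}\<^sup>* O C"
proof
  assume "\<exists>p. is_path C p u w \<and> 2 \<le> length p \<and> (\<forall>i. 0 < i \<and> i < length p - 1 \<longrightarrow> P (p ! i))"
  then obtain p where p: "is_path C p u w" "2 \<le> length p"
    "\<forall>i. 0 < i \<and> i < length p - 1 \<longrightarrow> P (p ! i)"
    by blast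
  moreover obtain q where "p = u # q"
    using is_path_ConsE[OF p(1)] by blast
  moreover have "\<forall>z\<in>set (butlast q). P z"
    using p(3) unfolding \<open>p = u # q\<close> interior_conv_butlast .
  ultimately have "is_path C (u # q) u w" "q \<noteq> []" "\<forall>z\<in>set (butlast q). P z"
    by auto
  then show "(u, w) \<in> {(a, b) \<in> C. P b}\<^sup>* O C"
    by (rule is_path_interior_imp)
next
  assume "(u, w) \<in> {(a, b) \<in> C. P b}\<^sup>* O C"
  then obtain m where "(u, m) \<in> {(a, b) \<in> C. P b}\<^sup>*" "(m, w) \<in> C"
    by (rule relcompEpair)
  from interior_imp_is_path[OF this] obtain p
    where p: "is_path C (u # p) u w" "p \<noteq> []" "\<forall>z\<in>set (butlast p). P z"
    by blast
  have "\<forall>i. 0 < i \<and> i < length (u # p) - 1 \<longrightarrow> P ((u # p) ! i)"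
    unfolding interior_conv_butlast by (fact p(3))
  moreover have "2 \<le> length (u # p)"
    using p(2) by (simp add: Suc_le_eq)
  ultimately show "\<exists>p. is_path C p u w \<and> 2 \<le> length p \<and> (\<forall>i. 0 < i \<and> i < length p - 1 \<longrightarrow> P (p ! i))"
    using p(1) by blast
qed

lemma rtrancl_into_O_eq_O_rtrancl_from:
  "{(a, b) \<in> C. b \<in> S}\<^sup>* O C = C O {(a, b) \<in> C. a \<in> S}\<^sup>*"
proof (intro equalityI subsetI)
  fix e assume "e \<in> {(a, b) \<in> C. b \<in> S}\<^sup>* O C"
  then obtain u m w where e: "e = (u, w)" "(u, m) \<in> {(a, b) \<in> C. b \<in> S}\<^sup>*" "(m, w) \<in> C"
    by blast
  from e(2,3) have "(u, w) \<in> C O {(a, b) \<in> C. a \<in> S}\<^sup>*"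
  proof (induction arbitrary: w rule: rtrancl_induct)
    case (step m m')
    then have "(u, m') \<in> C O {(a, b) \<in> C. a \<in> S}\<^sup>*" "(m', w) \<in> {(a, b) \<in> C. a \<in> S}"
      by auto
    then show ?case
      by (auto intro: rtrancl_into_rtrancl)
  qed blast
  with e(1) show "e \<in> C O {(a, b) \<in> C. a \<in> S}\<^sup>*" by simp
next
  fix e assume "e \<in> C O {(a, b) \<in> C. a \<in> S}\<^sup>*"
  then obtain u m w where e: "e = (u, w)" "(u, m) \<in> C" "(m, w) \<in> {(a, b) \<in> C. a \<in> S}\<^sup>*"
    by blast
  from e(3,2) have "(u, w) \<in> {(a, b) \<in> C. b \<in> S}\<^sup>* O C"
  proof (induction arbitrary: u rule: converse_rtrancl_induct)
    case (step m m')
    then have "(u, m) \<in> {(a, b) \<in> C. b \<in> S}" "(m, w) \<in> {(a, b) \<in> C. b \<in> S}\<^sup>* O C"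
      by auto
    then show ?case
      by (auto intro: converse_rtrancl_into_rtrancl)
  qed blast
  with e(1) show "e \<in> {(a, b) \<in> C. b \<in> S}\<^sup>* O C" by simp
qed

section \<open>Degrees, Hasse diagrams and isomorphisms\<close>

lemma Collect_eq_singletonD: "{x. P x} = {p} \<Longrightarrow> P a \<Longrightarrow> a = p"
  by (metis mem_Collect_eq singletonD)

lemma indeg_eq_0_iff: "finite B \<Longrightarrow> indeg B v = 0 \<longleftrightarrow> (\<forall>u. (u, v) \<notin> B)"
proof -
  assume "finite B"
  then have "finite {u. (u, v) \<in> B}"
    by (rule finite_subset[rotated, OF finite_imageI[of B fst]]) force
  then show ?thesis
    unfolding indeg_def by simp
qed

lemma indeg_eq_1_iff: "indeg B v = 1 \<longleftrightarrow> (\<exists>p. {u. (u, v) \<in> B} = {p})"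
  unfolding indeg_def One_nat_def by (rule card_1_singleton_iff)

lemma indeg_ge_2_iff:
  "finite B \<Longrightarrow> 2 \<le> indeg B v \<longleftrightarrow> (\<exists>a b. a \<noteq> b \<and> (a, v) \<in> B \<and> (b, v) \<in> B)"
proof -
  assume "finite B"
  then have "finite {u. (u, v) \<in> B}"
    by (rule finite_subset[rotated, OF finite_imageI[of B fst]]) force
  then show ?thesis
    unfolding indeg_def using card_le_Suc0_iff_eq[of "{u. (u, v) \<in> B}"] by auto
qed

lemma outdeg_eq_indeg_converse: "outdeg B v = indeg (B\<inverse>) v"
  by (simp add: outdeg_def indeg_def)

lemma outdeg_eq_0_iff: "finite B \<Longrightarrow> outdeg B v = 0 \<longleftrightarrow> (\<forall>w. (v, w) \<notin> B)"
  by (simp add: outdeg_eq_indeg_converse indeg_eq_0_iff)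

lemma outdeg_eq_1_iff: "outdeg B v = 1 \<longleftrightarrow> (\<exists>c. {w. (v, w) \<in> B} = {c})"
  using indeg_eq_1_iff[of "B\<inverse>" v] by (simp add: outdeg_eq_indeg_converse)

lemma trancl_hasse_diagram:
  assumes "finite R" "trans R" "acyclic R"
  shows "(R - R O R)\<^sup>+ = R"
proof
  show "(R - R O R)\<^sup>+ \<subseteq> R"
    using trancl_mono[of _ "R - R O R" R] trancl_id[OF assms(2)] by blast
next
  have wf: "wf R" "wf (R\<inverse>)"
    using assms by (auto intro: finite_acyclic_wf finite_acyclic_wf_converse)
  have "(u, w) \<in> (R - R O R)\<^sup>+" if "(u, w) \<in> R" for u w
    using that
  proof (induction w arbitrary: u rule: wf_induct_rule[OF wf(1)])
    case (1 w)
    define Q where "Q = {z. (u, z) \<in> R\<^sup>= \<and> (z, w) \<in> R}"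
    have "u \<in> Q"
      using "1.prems" by (simp add: Q_def)
    then obtain z where "z \<in> Q" and z_max: "\<And>y. (y, z) \<in> R\<inverse> \<Longrightarrow> y \<notin> Q"
      using wfE_min[OF wf(2)] by metis
    then have uz: "(u, z) \<in> R\<^sup>=" and "(z, w) \<in> R"
      by (auto simp: Q_def)
    have "(z, w) \<notin> R O R"
    proof
      assume "(z, w) \<in> R O R"
      then obtain y where "(z, y) \<in> R" "(y, w) \<in> R" by (rule relcompEpair)
      moreover from this have "(u, y) \<in> R\<^sup>="
        using uz assms(2) by (auto dest: transD)
      ultimately show False
        using z_max Q_def by blast
    qed
    with \<open>(z, w) \<in> R\<close> have zw: "(z, w) \<in> (R - R O R)\<^sup>+" by blast
    show ?case
    proof (cases "z = u")
      case False
      with uz have "(u, z) \<in> (R - R O R)\<^sup>+"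
        using "1.IH" \<open>(z, w) \<in> R\<close> by blast
      then show ?thesis using zw by (rule trancl_trans)
    qed (use zw in simp)
  qed
  then show "R \<subseteq> (R - R O R)\<^sup>+" by auto
qed

lemma hasse_diagram_no_shortcut:
  "trans R \<Longrightarrow> \<not> shortcut (R - R O R) u v"
  unfolding shortcut_iff
  using trancl_mono[of _ "R - R O R" R] trancl_id by blast

lemma iso_fix_refl: "iso_fix X V A V A"
  unfolding iso_fix_def by (intro exI[of _ id]) simp

lemma iso_fix_card:
  assumes "iso_fix X V A V' A'" "A \<subseteq> V \<times> V" "A' \<subseteq> V' \<times> V'"
  shows "card V = card V'" "card A = card A'"
proof -
  obtain f where f: "bij_betw f V V'" "\<forall>u\<in>V. \<forall>w\<in>V. (u, w) \<in> A \<longleftrightarrow> (f u, f w) \<in> A'"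
    using assms(1) unfolding iso_fix_def by blast
  show "card V = card V'"
    using f(1) by (rule bij_betw_same_card)
  have "A' = map_prod f f ` A"
  proof
    show "map_prod f f ` A \<subseteq> A'"
      using f(2) assms(2) by auto
    show "A' \<subseteq> map_prod f f ` A"
    proof
      fix e assume "e \<in> A'"
      then obtain u w where "e = (f u, f w)" "u \<in> V" "w \<in> V"
        using assms(3) f(1) by (auto simp: bij_betw_def)
      with f(2) \<open>e \<in> A'\<close> show "e \<in> map_prod f f ` A" by force
    qed
  qed
  moreover have "inj_on (map_prod f f) A"
    using f(1) assms(2) by (auto simp: bij_betw_def inj_on_def mem_Times_iff subset_iff)
  ultimately show "card A = card A'"
    by (simp add: card_image)
qed

section \<open>Dominance in a phylogenetic network\<close>

locale phylo_net =
  fixes X V :: "'v set" and A :: "('v \<times> 'v) set"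
  assumes phylo_network: "phylo_network X V A"
begin

abbreviation \<rho> where "\<rho> \<equiv> root V A"

lemma finite_V: "finite V"
  and arcs_subset: "A \<subseteq> V \<times> V"
  and cycle_free: "\<And>v p. is_path A p v v \<Longrightarrow> length p = 1"
  and ex1_root: "\<exists>!r. r \<in> V \<and> indeg A r = 0"
  and degree_cases: "\<And>v. v \<in> V \<Longrightarrow> indeg A v \<noteq> 0 \<Longrightarrow>
        (indeg A v = 1 \<and> outdeg A v = 0) \<or> (indeg A v = 1 \<and> 2 \<le> outdeg A v) \<or>
        (outdeg A v = 1 \<and> 2 \<le> indeg A v)"
  and leaves_eq: "X = {v \<in> V. indeg A v = 1 \<and> outdeg A v = 0}"
  using phylo_network unfolding phylo_network_def by auto

lemma finite_A: "finite A"
  using finite_V arcs_subset by (meson finite_SigmaI finite_subset)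

lemma arc_in_V: "(u, v) \<in> A \<Longrightarrow> u \<in> V \<and> v \<in> V"
  using arcs_subset by auto

lemma trancl_irrefl: "(v, v) \<notin> A\<^sup>+"
  using cycle_free by (fastforce simp: trancl_iff_is_path)

lemma acyclic_A: "acyclic A"
  unfolding acyclic_def using trancl_irrefl by blast

lemma wf_trancl_A: "wf (A\<^sup>+)"
  using finite_acyclic_wf[OF finite_A acyclic_A] by (rule wf_trancl)

lemma wf_trancl_converse_A: "wf ((A\<^sup>+)\<inverse>)"
  using wf_trancl[OF finite_acyclic_wf_converse[OF finite_A acyclic_A]]
  by (simp add: trancl_converse)

lemma not_rtrancl_if_trancl: "(u, v) \<in> A\<^sup>+ \<Longrightarrow> (v, u) \<notin> A\<^sup>*"
  using trancl_irrefl by (meson rtrancl_trancl_trancl)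

lemma root_in_V: "\<rho> \<in> V" and indeg_root: "indeg A \<rho> = 0"
  using theI'[OF ex1_root] unfolding root_def by auto

lemma no_arc_to_root: "(u, \<rho>) \<notin> A"
  using indeg_root indeg_eq_0_iff[OF finite_A] by blast

lemma eq_root_if_no_arc_in: "v \<in> V \<Longrightarrow> \<forall>u. (u, v) \<notin> A \<Longrightarrow> v = \<rho>"
  using ex1_root root_in_V indeg_root indeg_eq_0_iff[OF finite_A] by blast

lemma root_reaches: "v \<in> V \<Longrightarrow> (\<rho>, v) \<in> A\<^sup>*"
proof (induction v rule: wf_induct_rule[OF wf_trancl_A])
  case (1 v)
  show ?case
  proof (cases "\<exists>u. (u, v) \<in> A")
    case True
    then obtain u where "(u, v) \<in> A" by blast
    with "1.IH" show ?thesis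
      using arc_in_V by (meson r_into_trancl' rtrancl.rtrancl_into_rtrancl)
  next
    case False
    with "1.prems" show ?thesis
      using eq_root_if_no_arc_in by auto
  qed
qed

lemma leaves_subset: "X \<subseteq> V"
  using leaves_eq by blast

lemma no_arc_from_leaf: "x \<in> X \<Longrightarrow> (x, y) \<notin> A"
  using leaves_eq outdeg_eq_0_iff[OF finite_A] by blast

lemma leaf_unique_parent: "x \<in> X \<Longrightarrow> \<exists>p. {u. (u, x) \<in> A} = {p}"
  unfolding indeg_eq_1_iff[symmetric] using leaves_eq by blast

lemma root_not_leaf: "\<rho> \<notin> X"
  using leaves_eq indeg_root by simp

lemma leaf_or_root_if_no_arc_out:
  assumes "v \<in> V" "\<forall>w. (v, w) \<notin> A"
  shows "v \<in> X \<or> v = \<rho>"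
proof (cases "v = \<rho>")
  case False
  then have "indeg A v \<noteq> 0"
    using assms(1) eq_root_if_no_arc_in indeg_eq_0_iff[OF finite_A] by blast
  moreover have "outdeg A v = 0"
    using assms(2) outdeg_eq_0_iff[OF finite_A] by blast
  ultimately have "indeg A v = 1"
    using degree_cases[OF assms(1)] by auto
  with \<open>outdeg A v = 0\<close> assms(1) show ?thesis
    using leaves_eq by blast
qed simp

lemma reaches_leaf: "v \<in> V \<Longrightarrow> v \<noteq> \<rho> \<Longrightarrow> \<exists>x\<in>X. (v, x) \<in> A\<^sup>*"
proof (induction v rule: wf_induct_rule[OF wf_trancl_converse_A])
  case (1 v)
  show ?case
  proof (cases "\<exists>w. (v, w) \<in> A")
    case True
    then obtain w where "(v, w) \<in> A" by blast
    moreover from this have "w \<in> V" "w \<noteq> \<rho>"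
      using arc_in_V no_arc_to_root by blast+
    ultimately obtain x where "x \<in> X" "(w, x) \<in> A\<^sup>*"
      using "1.IH" by blast
    with \<open>(v, w) \<in> A\<close> show ?thesis
      by (meson converse_rtrancl_into_rtrancl)
  next
    case False
    with "1.prems" show ?thesis
      using leaf_or_root_if_no_arc_out by blast
  qed
qed

definition dominates :: "'v \<Rightarrow> 'v \<Rightarrow> bool" where
  "dominates u v \<longleftrightarrow> (\<forall>p. is_path A p \<rho> v \<longrightarrow> u \<in> set p)"

lemma dominates_iff_avoiding: "u \<noteq> \<rho> \<Longrightarrow> dominates u v \<longleftrightarrow> (\<rho>, v) \<notin> (avoiding A u)\<^sup>*"
  unfolding dominates_def using avoiding_rtrancl_iff[where u = \<rho> and w = u and B = A] by blast

lemma dominates_root: "dominates \<rho> v"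
  unfolding dominates_def by (metis is_path_ConsE list.set_intros(1))

lemma dominates_refl: "dominates v v"
  unfolding dominates_def is_path_def by auto

lemma dominates_rtrancl_split:
  assumes vx: "dominates v x" and "B \<subseteq> A" and "(\<rho>, x) \<in> B\<^sup>*"
  shows "(\<rho>, v) \<in> B\<^sup>* \<and> (v, x) \<in> B\<^sup>*"
proof (cases "v = \<rho>")
  case False
  have "(\<rho>, x) \<notin> (avoiding B v)\<^sup>*"
  proof
    assume "(\<rho>, x) \<in> (avoiding B v)\<^sup>*"
    then have "(\<rho>, x) \<in> (avoiding A v)\<^sup>*"
      using rtrancl_mono[OF avoiding_mono[OF \<open>B \<subseteq> A\<close>]] by blast
    with vx show False
      using dominates_iff_avoiding[OF False] by simp
  qed
  with \<open>(\<rho>, x) \<in> B\<^sup>*\<close> show ?thesis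
    by (meson rtrancl_avoidingI)
qed (use assms(3) in simp)

lemma dominates_imp_rtrancl: "dominates u v \<Longrightarrow> v \<in> V \<Longrightarrow> (u, v) \<in> A\<^sup>*"
  using dominates_rtrancl_split root_reaches by blast

lemma dominates_if_rtrancl:
  assumes "dominates u x" "(v, x) \<in> A\<^sup>*" "(v, u) \<notin> A\<^sup>*"
  shows "dominates u v"
proof (cases "u = \<rho>")
  case False
  have "(v, x) \<in> (avoiding A u)\<^sup>*"
    using assms(2,3) by (blast intro: rtrancl_avoidingI)
  then show ?thesis
    using assms(1) dominates_iff_avoiding[OF False] by (meson rtrancl_trans)
qed (simp add: dominates_root)

lemma dominates_comparable:
  "dominates u x \<Longrightarrow> v \<in> V \<Longrightarrow> (v, x) \<in> A\<^sup>* \<Longrightarrow> (v, u) \<in> A\<^sup>* \<or> (u, v) \<in> A\<^sup>*"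
  using dominates_if_rtrancl dominates_imp_rtrancl by blast

lemma dominates_trans:
  assumes uv: "dominates u v" and vw: "dominates v w"
  shows "dominates u w"
proof (cases "u = \<rho>")
  case False
  show ?thesis
  proof (rule ccontr)
    assume "\<not> dominates u w"
    then have "(\<rho>, w) \<in> (avoiding A u)\<^sup>*"
      using dominates_iff_avoiding[OF False] by simp
    then have "(\<rho>, v) \<in> (avoiding A u)\<^sup>*"
      using dominates_rtrancl_split[OF vw avoiding_subset] by blast
    with uv show False
      using dominates_iff_avoiding[OF False] by simp
  qed
qed (simp add: dominates_root)

lemma dominates_unique_parent:
  assumes "v \<noteq> \<rho>" "{u. (u, v) \<in> A} = {p}"
  shows "dominates p v"
proof (cases "p = \<rho>")
  case False
  have "(\<rho>, v) \<notin> (avoiding A p)\<^sup>*"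
  proof
    assume "(\<rho>, v) \<in> (avoiding A p)\<^sup>*"
    then obtain m where "(m, v) \<in> avoiding A p"
      using assms(1) by (auto elim: rtranclE)
    with assms(2) show False
      by (auto simp: avoiding_def)
  qed
  with False show ?thesis
    using dominates_iff_avoiding by simp
qed (simp add: dominates_root)

lemma dominates_unique_child:
  assumes vx: "dominates v x" and "v \<noteq> x" and c: "{w. (v, w) \<in> A} = {c}"
  shows "dominates c x"
proof (cases "c = \<rho>")
  case False
  have "(\<rho>, x) \<notin> (avoiding A c)\<^sup>*"
  proof
    assume "(\<rho>, x) \<in> (avoiding A c)\<^sup>*"
    then have "(v, x) \<in> (avoiding A c)\<^sup>*"
      using dominates_rtrancl_split[OF vx avoiding_subset] by blast
    then obtain m where "(v, m) \<in> avoiding A c"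
      using \<open>v \<noteq> x\<close> by (auto elim: converse_rtranclE)
    with c show False
      by (auto simp: avoiding_def)
  qed
  with False show ?thesis
    using dominates_iff_avoiding by simp
qed (simp add: dominates_root)

abbreviation Vis where "Vis \<equiv> Vvis X V A"

lemma visible_iff: "v \<in> Vis \<longleftrightarrow> v \<in> V \<and> (v = \<rho> \<or> (\<exists>x\<in>X. dominates v x))"
  unfolding Vvis_def visible_def dominates_def[symmetric] using dominates_refl by auto

lemma Vis_subset: "Vis \<subseteq> V"
  using visible_iff by blast

lemma root_visible: "\<rho> \<in> Vis"
  using visible_iff root_in_V by blast

lemma leaves_visible: "X \<subseteq> Vis"
  using visible_iff dominates_refl leaves_subset by blast

section \<open>The cover graph\<close>

definition vis_less :: "('v \<times> 'v) set" where
  "vis_less = {(u, v). u \<in> Vis \<and> v \<in> Vis \<and> (u, v) \<in> A\<^sup>+}"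

abbreviation Cov where "Cov \<equiv> cov_A X V A"

lemma trans_vis_less: "trans vis_less"
  unfolding vis_less_def trans_def by (blast intro: trancl_trans)

lemma cov_eq: "Cov = vis_less - vis_less O vis_less"
proof -
  have "{(u, v). u \<in> Vis \<and> v \<in> Vis \<and> u \<noteq> v \<and> reach A u v} = vis_less"
    unfolding vis_less_def reach_iff_rtrancl
    using trancl_irrefl by (auto simp: rtrancl_eq_or_trancl)
  moreover have "shortcut vis_less u v \<longleftrightarrow> (u, v) \<in> vis_less \<and> (u, v) \<in> vis_less O vis_less"
    for u v
    by (simp add: shortcut_iff trans_vis_less)
  ultimately show ?thesis
    unfolding cov_A_def Let_def by auto
qed

lemma cov_trancl: "Cov\<^sup>+ = vis_less"
proof -
  have "vis_less \<subseteq> V \<times> V"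
    using Vis_subset by (auto simp: vis_less_def)
  then have "finite vis_less"
    using finite_V finite_subset by blast
  moreover have "acyclic vis_less"
    unfolding acyclic_def trancl_id[OF trans_vis_less]
    using trancl_irrefl by (simp add: vis_less_def)
  ultimately show ?thesis
    unfolding cov_eq using trancl_hasse_diagram trans_vis_less by blast
qed

lemma cov_iff:
  "(u, v) \<in> Cov \<longleftrightarrow>
    u \<in> Vis \<and> v \<in> Vis \<and> (u, v) \<in> A\<^sup>+ \<and> \<not> (\<exists>w\<in>Vis. (u, w) \<in> A\<^sup>+ \<and> (w, v) \<in> A\<^sup>+)"
  unfolding cov_eq vis_less_def by auto

lemma cov_trancl_iff: "(u, v) \<in> Cov\<^sup>+ \<longleftrightarrow> u \<in> Vis \<and> v \<in> Vis \<and> (u, v) \<in> A\<^sup>+"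
  unfolding cov_trancl vis_less_def by simp

lemma covD: "(u, v) \<in> Cov \<Longrightarrow> u \<in> Vis \<and> v \<in> Vis \<and> (u, v) \<in> A\<^sup>+"
  using cov_iff by blast

lemma cov_no_visible_between:
  "(u, v) \<in> Cov \<Longrightarrow> w \<in> Vis \<Longrightarrow> (u, w) \<in> A\<^sup>+ \<Longrightarrow> (w, v) \<in> A\<^sup>+ \<Longrightarrow> False"
  using cov_iff by blast

lemma cov_rtrancl_imp_rtrancl: "(u, v) \<in> Cov\<^sup>* \<Longrightarrow> (u, v) \<in> A\<^sup>*"
  using cov_trancl_iff by (metis rtrancl_eq_or_trancl trancl_into_rtrancl)

lemma finite_Cov: "finite Cov"
proof -
  have "Cov \<subseteq> V \<times> V"
    using covD Vis_subset by fast
  then show ?thesis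
    using finite_V finite_subset by blast
qed

lemma no_cov_to_root: "(u, \<rho>) \<notin> Cov"
  using covD no_arc_to_root by (metis tranclE)

lemma no_cov_from_leaf: "x \<in> X \<Longrightarrow> (x, y) \<notin> Cov"
  using covD no_arc_from_leaf by (metis tranclD)

lemma cov_parent_exists: "v \<in> Vis \<Longrightarrow> v \<noteq> \<rho> \<Longrightarrow> \<exists>u. (u, v) \<in> Cov"
proof -
  assume "v \<in> Vis" "v \<noteq> \<rho>"
  then have "(\<rho>, v) \<in> Cov\<^sup>+"
    using cov_trancl_iff root_visible root_reaches Vis_subset by (auto simp: rtrancl_eq_or_trancl)
  then show ?thesis
    by (meson tranclD2)
qed

lemma cov_child_exists: "v \<in> Vis \<Longrightarrow> v \<noteq> \<rho> \<Longrightarrow> v \<notin> X \<Longrightarrow> \<exists>c. (v, c) \<in> Cov"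
proof -
  assume v: "v \<in> Vis" "v \<noteq> \<rho>" "v \<notin> X"
  then obtain x where "x \<in> X" "(v, x) \<in> A\<^sup>*"
    using reaches_leaf Vis_subset by blast
  with v have "(v, x) \<in> Cov\<^sup>+"
    using cov_trancl_iff leaves_visible by (auto simp: rtrancl_eq_or_trancl)
  then show ?thesis
    by (meson tranclD)
qed

lemma cov_parents_eq:
  assumes "p \<in> Vis" "v \<in> Vis" "(p, v) \<in> A" and below: "\<And>w. (w, v) \<in> A\<^sup>+ \<Longrightarrow> (w, p) \<in> A\<^sup>*"
  shows "{u. (u, v) \<in> Cov} = {p}"
proof -
  have "(p, v) \<in> Cov"
    using assms not_rtrancl_if_trancl unfolding cov_iff by blast
  moreover have "u = p" if "(u, v) \<in> Cov" for u
    using that below cov_iff assms(1,3) by (metis r_into_trancl' rtranclD)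
  ultimately show ?thesis by blast
qed

lemma cov_children_eq:
  assumes "c \<in> Vis" "v \<in> Vis" "(v, c) \<in> A" and above: "\<And>w. (v, w) \<in> A\<^sup>+ \<Longrightarrow> (c, w) \<in> A\<^sup>*"
  shows "{w. (v, w) \<in> Cov} = {c}"
proof -
  have "(v, c) \<in> Cov"
    using assms not_rtrancl_if_trancl unfolding cov_iff by blast
  moreover have "w = c" if "(v, w) \<in> Cov" for w
    using that above cov_iff assms(1,3) by (metis r_into_trancl' rtranclD)
  ultimately show ?thesis by blast
qed

lemma cov_unique_parent:
  assumes v: "v \<in> Vis" "v \<noteq> \<rho>" and p: "{u. (u, v) \<in> A} = {p}"
  shows "{u. (u, v) \<in> Cov} = {p}"
proof (rule cov_parents_eq)
  obtain x where "x \<in> X" "dominates v x"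
    using v visible_iff by blast
  moreover have "dominates p v"
    using v(2) p by (rule dominates_unique_parent)
  ultimately show "p \<in> Vis"
    using p arc_in_V visible_iff dominates_trans by blast
  show "(p, v) \<in> A"
    using p by blast
  show "(w, p) \<in> A\<^sup>*" if wv: "(w, v) \<in> A\<^sup>+" for w
  proof -
    obtain z where "(w, z) \<in> A\<^sup>*" "(z, v) \<in> A"
      using tranclD2[OF wv] by blast
    moreover have "z = p"
      using Collect_eq_singletonD[OF p] \<open>(z, v) \<in> A\<close> by simp
    ultimately show ?thesis by simp
  qed
qed (use v in simp)

lemma cov_unique_child:
  assumes v: "v \<in> Vis" "v \<noteq> \<rho>" "v \<notin> X" and c: "{w. (v, w) \<in> A} = {c}"
  shows "{w. (v, w) \<in> Cov} = {c}"
proof (rule cov_children_eq)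
  obtain x where "x \<in> X" "dominates v x"
    using v visible_iff by blast
  moreover from this have "dominates c x"
    using v(3) c dominates_unique_child by blast
  ultimately show "c \<in> Vis"
    using c arc_in_V visible_iff by blast
  show "(v, c) \<in> A"
    using c by blast
  show "(c, w) \<in> A\<^sup>*" if vw: "(v, w) \<in> A\<^sup>+" for w
  proof -
    obtain z where "(v, z) \<in> A" "(z, w) \<in> A\<^sup>*"
      using tranclD[OF vw] by blast
    moreover have "z = c"
      using Collect_eq_singletonD[OF c] \<open>(v, z) \<in> A\<close> by simp
    ultimately show ?thesis by simp
  qed
qed (use v in simp)

lemma indeg_cov_root: "indeg Cov \<rho> = 0"
  using no_cov_to_root indeg_eq_0_iff[OF finite_Cov] by blast

lemma cov_degrees_leaf:
  assumes "x \<in> X"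
  shows "indeg Cov x = 1" "outdeg Cov x = 0"
proof -
  obtain p where "{u. (u, x) \<in> A} = {p}"
    using leaf_unique_parent[OF assms] by blast
  moreover have "x \<in> Vis" "x \<noteq> \<rho>"
    using assms leaves_visible root_not_leaf by blast+
  ultimately have "{u. (u, x) \<in> Cov} = {p}"
    using cov_unique_parent by blast
  then show "indeg Cov x = 1"
    unfolding indeg_eq_1_iff by blast
  show "outdeg Cov x = 0"
    using assms no_cov_from_leaf outdeg_eq_0_iff[OF finite_Cov] by blast
qed

lemma cov_degree_cases:
  assumes v: "v \<in> Vis" "v \<noteq> \<rho>" "v \<notin> X"
  shows "indeg Cov v = 1 \<or> outdeg Cov v = 1"
proof -
  have "v \<in> V"
    using v Vis_subset by blast
  moreover have "indeg A v \<noteq> 0"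
    using v(2) \<open>v \<in> V\<close> eq_root_if_no_arc_in indeg_eq_0_iff[OF finite_A] by blast
  ultimately have "indeg A v = 1 \<or> outdeg A v = 1"
    using degree_cases v(3) leaves_eq by blast
  then show ?thesis
  proof
    assume "indeg A v = 1"
    then obtain p where "{u. (u, v) \<in> A} = {p}"
      unfolding indeg_eq_1_iff by blast
    then have "{u. (u, v) \<in> Cov} = {p}"
      using cov_unique_parent[OF v(1,2)] by blast
    then show ?thesis
      unfolding indeg_eq_1_iff by blast
  next
    assume "outdeg A v = 1"
    then obtain c where "{w. (v, w) \<in> A} = {c}"
      unfolding outdeg_eq_1_iff by blast
    then have "{w. (v, w) \<in> Cov} = {c}"
      using cov_unique_child[OF v] by blast
    then show ?thesis
      unfolding outdeg_eq_1_iff by blast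
  qed
qed

section \<open>Subdividing vertices and the normalisation\<close>

abbreviation Sub where "Sub \<equiv> {v. subdividing Cov v}"

lemma sub_unique_parent:
  assumes "s \<in> Sub" "(a, s) \<in> Cov" "(b, s) \<in> Cov"
  shows "a = b"
proof -
  obtain p where p: "{u. (u, s) \<in> Cov} = {p}"
    using assms(1) unfolding subdividing_def indeg_eq_1_iff by blast
  show ?thesis
    using Collect_eq_singletonD[OF p, of a] Collect_eq_singletonD[OF p, of b] assms(2,3) by simp
qed

lemma sub_unique_child:
  assumes "s \<in> Sub" "(s, a) \<in> Cov" "(s, b) \<in> Cov"
  shows "a = b"
proof -
  obtain c where c: "{w. (s, w) \<in> Cov} = {c}"
    using assms(1) unfolding subdividing_def outdeg_eq_1_iff by blast
  show ?thesis
    using Collect_eq_singletonD[OF c, of a] Collect_eq_singletonD[OF c, of b] assms(2,3) by simp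
qed

lemma sub_visible: "s \<in> Sub \<Longrightarrow> s \<in> Vis"
  unfolding subdividing_def indeg_eq_1_iff using covD by blast

lemma sub_not_root: "s \<in> Sub \<Longrightarrow> s \<noteq> \<rho>"
  using indeg_cov_root by (auto simp: subdividing_def)

lemma sub_not_leaf: "s \<in> Sub \<Longrightarrow> s \<notin> X"
  using cov_degrees_leaf(2) by (auto simp: subdividing_def)

lemma sub_child_below:
  assumes "s \<in> Sub" "(s, c) \<in> Cov" "w \<in> Vis" "(s, w) \<in> A\<^sup>+"
  shows "(c, w) \<in> A\<^sup>*"
proof -
  have "(s, w) \<in> Cov\<^sup>+"
    using assms sub_visible cov_trancl_iff by blast
  then obtain z where "(s, z) \<in> Cov" "(z, w) \<in> Cov\<^sup>*"
    by (meson tranclD)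
  with assms(1,2) show ?thesis
    using sub_unique_child cov_rtrancl_imp_rtrancl by blast
qed

text \<open>A subdividing vertex dominates some leaf, and every path to that leaf runs through
  its unique child.\<close>
lemma sub_dominates_child:
  assumes s: "s \<in> Sub" and sc: "(s, c) \<in> Cov"
  shows "dominates s c"
proof -
  obtain x where x: "x \<in> X" "dominates s x"
    using s sub_visible sub_not_root visible_iff by blast
  then have "(s, x) \<in> A\<^sup>+"
    using s sub_not_leaf dominates_imp_rtrancl leaves_subset
    by (metis rtrancl_eq_or_trancl subsetD)
  then have "(c, x) \<in> A\<^sup>*"
    using s sc x(1) leaves_visible sub_child_below by blast
  moreover have "(c, s) \<notin> A\<^sup>*"
    using sc covD not_rtrancl_if_trancl by blast
  ultimately show ?thesis
    using x(2) dominates_if_rtrancl by blast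
qed

lemma sub_only_parent_of_child:
  assumes s: "s \<in> Sub" and sc: "(s, c) \<in> Cov" and ac: "(a, c) \<in> Cov"
  shows "a = s"
proof (rule ccontr)
  assume "a \<noteq> s"
  have "a \<in> V" "(a, c) \<in> A\<^sup>*"
    using covD[OF ac] Vis_subset by (auto intro: trancl_into_rtrancl)
  then have "(a, s) \<in> A\<^sup>* \<or> (s, a) \<in> A\<^sup>*"
    using sub_dominates_child[OF s sc] dominates_comparable by blast
  then have "(a, s) \<in> A\<^sup>+ \<or> (s, a) \<in> A\<^sup>+"
    using \<open>a \<noteq> s\<close> by (auto simp: rtrancl_eq_or_trancl)
  then show False
    using s sc ac sub_visible covD cov_no_visible_between by metis
qed

lemma cluster_sub_child:
  assumes s: "s \<in> Sub" and sc: "(s, c) \<in> Cov"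
  shows "cluster X A s = cluster X A c"
proof -
  have "(s, c) \<in> A\<^sup>+"
    using sc covD by blast
  moreover have "(c, x) \<in> A\<^sup>*" if "x \<in> X" "(s, x) \<in> A\<^sup>*" for x
  proof -
    have "(s, x) \<in> A\<^sup>+"
      using that s sub_not_leaf by (metis rtrancl_eq_or_trancl)
    then show ?thesis
      using s sc that(1) leaves_visible sub_child_below by blast
  qed
  ultimately show ?thesis
    unfolding cluster_def reach_iff_rtrancl by (auto intro: rtrancl_trans)
qed

abbreviation Vn where "Vn \<equiv> norm_V X V A"
abbreviation An where "An \<equiv> norm_A X V A"

definition into_Sub :: "('v \<times> 'v) set" where
  "into_Sub = {(a, b) \<in> Cov. b \<in> Sub}"

definition from_Sub :: "('v \<times> 'v) set" where
  "from_Sub = {(a, b) \<in> Cov. a \<in> Sub}"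

lemma norm_V_iff: "v \<in> Vn \<longleftrightarrow> v \<in> Vis \<and> v \<notin> Sub"
  unfolding norm_V_def by simp

lemma norm_A_iff_into: "(u, w) \<in> An \<longleftrightarrow> u \<in> Vn \<and> w \<in> Vn \<and> (u, w) \<in> into_Sub\<^sup>* O Cov"
  unfolding norm_A_def into_Sub_def
  using interior_path_iff[of Cov u w "subdividing Cov"] by simp

lemma norm_A_iff_from: "(u, w) \<in> An \<longleftrightarrow> u \<in> Vn \<and> w \<in> Vn \<and> (u, w) \<in> Cov O from_Sub\<^sup>*"
  unfolding norm_A_iff_into into_Sub_def from_Sub_def rtrancl_into_O_eq_O_rtrancl_from ..

lemma into_Sub_rtrancl_imp_eq: "(u, v) \<in> into_Sub\<^sup>* \<Longrightarrow> v \<notin> Sub \<Longrightarrow> u = v"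
  by (erule rtranclE) (auto simp: into_Sub_def)

lemma from_Sub_rtrancl_imp_eq: "(u, v) \<in> from_Sub\<^sup>* \<Longrightarrow> u \<notin> Sub \<Longrightarrow> u = v"
  by (erule converse_rtranclE) (auto simp: from_Sub_def)

lemma into_Sub_rtrancl_imp: "(u, v) \<in> into_Sub\<^sup>* \<Longrightarrow> (u, v) \<in> Cov\<^sup>*"
  by (rule subsetD[OF rtrancl_mono]) (auto simp: into_Sub_def)

lemma into_Sub_top_unique:
  assumes "(u, a) \<in> into_Sub\<^sup>*" "(u', a) \<in> into_Sub\<^sup>*" "u \<notin> Sub" "u' \<notin> Sub"
  shows "u = u'"
proof -
  have "single_valued (into_Sub\<inverse>)"
    using sub_unique_parent by (auto simp: into_Sub_def single_valued_def)
  then have "(u, u') \<in> into_Sub\<^sup>* \<or> (u', u) \<in> into_Sub\<^sup>*"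
    using assms(1,2) single_valued_confluent[of "into_Sub\<inverse>" a u u']
    by (auto simp: rtrancl_converse)
  then show ?thesis
    using assms(3,4) into_Sub_rtrancl_imp_eq by metis
qed

lemma from_Sub_end_unique:
  assumes "(c, w) \<in> from_Sub\<^sup>*" "(c, w') \<in> from_Sub\<^sup>*" "w \<notin> Sub" "w' \<notin> Sub"
  shows "w = w'"
proof -
  have "single_valued from_Sub"
    using sub_unique_child by (auto simp: from_Sub_def single_valued_def)
  then have "(w, w') \<in> from_Sub\<^sup>* \<or> (w', w) \<in> from_Sub\<^sup>*"
    using assms(1,2) by (rule single_valued_confluent)
  then show ?thesis
    using assms(3,4) from_Sub_rtrancl_imp_eq by metis
qed

lemma into_Sub_top_exists: "a \<in> Vis \<Longrightarrow> \<exists>u\<in>Vn. (u, a) \<in> into_Sub\<^sup>*"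
proof (induction a rule: wf_induct_rule[OF wf_trancl_A])
  case (1 a)
  show ?case
  proof (cases "a \<in> Sub")
    case True
    then obtain b where "(b, a) \<in> Cov"
      unfolding subdividing_def indeg_eq_1_iff by blast
    moreover from this obtain u where "u \<in> Vn" "(u, b) \<in> into_Sub\<^sup>*"
      using "1.IH" covD by blast
    ultimately show ?thesis
      using True by (auto simp: into_Sub_def intro: rtrancl_into_rtrancl)
  qed (use "1.prems" norm_V_iff in blast)
qed

lemma from_Sub_end_exists: "a \<in> Vis \<Longrightarrow> \<exists>w\<in>Vn. (a, w) \<in> from_Sub\<^sup>*"
proof (induction a rule: wf_induct_rule[OF wf_trancl_converse_A])
  case (1 a)
  show ?case
  proof (cases "a \<in> Sub")
    case True
    then obtain c where "(a, c) \<in> Cov"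
      unfolding subdividing_def outdeg_eq_1_iff by blast
    moreover from this obtain w where "w \<in> Vn" "(c, w) \<in> from_Sub\<^sup>*"
      using "1.IH" covD by blast
    ultimately show ?thesis
      using True by (auto simp: from_Sub_def intro: converse_rtrancl_into_rtrancl)
  qed (use "1.prems" norm_V_iff in blast)
qed

definition sub_top :: "'v \<Rightarrow> 'v" where
  "sub_top a = (SOME u. u \<in> Vn \<and> (u, a) \<in> into_Sub\<^sup>*)"

definition sub_end :: "'v \<Rightarrow> 'v" where
  "sub_end a = (SOME w. w \<in> Vn \<and> (a, w) \<in> from_Sub\<^sup>*)"

lemma sub_top: "a \<in> Vis \<Longrightarrow> sub_top a \<in> Vn \<and> (sub_top a, a) \<in> into_Sub\<^sup>*"
  unfolding sub_top_def using into_Sub_top_exists by (rule someI2_bex)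

lemma sub_end: "a \<in> Vis \<Longrightarrow> sub_end a \<in> Vn \<and> (a, sub_end a) \<in> from_Sub\<^sup>*"
  unfolding sub_end_def using from_Sub_end_exists by (rule someI2_bex)

lemma sub_top_eq: "a \<in> Vis \<Longrightarrow> u \<in> Vn \<Longrightarrow> (u, a) \<in> into_Sub\<^sup>* \<Longrightarrow> sub_top a = u"
  using sub_top into_Sub_top_unique norm_V_iff by metis

lemma sub_end_eq: "a \<in> Vis \<Longrightarrow> w \<in> Vn \<Longrightarrow> (a, w) \<in> from_Sub\<^sup>* \<Longrightarrow> sub_end a = w"
  using sub_end from_Sub_end_unique norm_V_iff by metis

lemma norm_parents_eq:
  assumes "v \<in> Vn"
  shows "{u. (u, v) \<in> An} = sub_top ` {a. (a, v) \<in> Cov}"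
proof (intro equalityI subsetI)
  fix u assume "u \<in> {u. (u, v) \<in> An}"
  then obtain m where "u \<in> Vn" "(u, m) \<in> into_Sub\<^sup>*" "(m, v) \<in> Cov"
    unfolding norm_A_iff_into by blast
  then show "u \<in> sub_top ` {a. (a, v) \<in> Cov}"
    using sub_top_eq covD by (metis imageI mem_Collect_eq)
next
  fix u assume "u \<in> sub_top ` {a. (a, v) \<in> Cov}"
  then obtain a where "(a, v) \<in> Cov" "u = sub_top a" by blast
  with assms show "u \<in> {u. (u, v) \<in> An}"
    unfolding norm_A_iff_into using sub_top covD by blast
qed

lemma norm_children_eq:
  assumes "v \<in> Vn"
  shows "{w. (v, w) \<in> An} = sub_end ` {c. (v, c) \<in> Cov}"
proof (intro equalityI subsetI)
  fix w assume "w \<in> {w. (v, w) \<in> An}"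
  then obtain m where "w \<in> Vn" "(v, m) \<in> Cov" "(m, w) \<in> from_Sub\<^sup>*"
    unfolding norm_A_iff_from by blast
  then show "w \<in> sub_end ` {c. (v, c) \<in> Cov}"
    using sub_end_eq covD by (metis imageI mem_Collect_eq)
next
  fix w assume "w \<in> sub_end ` {c. (v, c) \<in> Cov}"
  then obtain c where "(v, c) \<in> Cov" "w = sub_end c" by blast
  with assms show "w \<in> {w. (v, w) \<in> An}"
    unfolding norm_A_iff_from using sub_end covD by blast
qed

lemma indeg_norm:
  assumes "v \<in> Vn"
  shows "indeg An v = indeg Cov v"
proof -
  have "inj_on sub_top {a. (a, v) \<in> Cov}"
  proof (rule inj_onI)
    fix a b assume ab: "a \<in> {a. (a, v) \<in> Cov}" "b \<in> {a. (a, v) \<in> Cov}" "sub_top a = sub_top b"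
    show "a = b"
    proof (cases "a \<in> Sub \<or> b \<in> Sub")
      case True
      with ab(1,2) show ?thesis
        using sub_only_parent_of_child by auto
    next
      case False
      with ab show ?thesis
        using sub_top_eq covD norm_V_iff by (metis mem_Collect_eq rtrancl.rtrancl_refl)
    qed
  qed
  then show ?thesis
    unfolding indeg_def norm_parents_eq[OF assms] by (rule card_image)
qed

lemma from_Sub_trancl_parent:
  assumes "(c, d) \<in> from_Sub\<^sup>+" "(v, d) \<in> Cov"
  shows "v \<in> Sub"
proof -
  obtain e where "(e, d) \<in> from_Sub"
    using tranclD2[OF assms(1)] by blast
  with assms(2) show ?thesis
    using sub_only_parent_of_child by (auto simp: from_Sub_def)
qed

lemma outdeg_norm:
  assumes "v \<in> Vn"
  shows "outdeg An v = outdeg Cov v"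
proof -
  have sv: "single_valued (from_Sub\<inverse>)"
    using sub_only_parent_of_child by (auto simp: from_Sub_def single_valued_def)
  have "inj_on sub_end {c. (v, c) \<in> Cov}"
  proof (rule inj_onI, rule ccontr)
    fix c d assume cd: "c \<in> {c. (v, c) \<in> Cov}" "d \<in> {c. (v, c) \<in> Cov}" "sub_end c = sub_end d"
      "c \<noteq> d"
    then have "(c, sub_end c) \<in> from_Sub\<^sup>*" "(d, sub_end c) \<in> from_Sub\<^sup>*"
      using sub_end covD by (metis mem_Collect_eq)+
    then have "(c, d) \<in> from_Sub\<^sup>* \<or> (d, c) \<in> from_Sub\<^sup>*"
      using single_valued_confluent[OF sv] by (auto simp: rtrancl_converse)
    then have "(c, d) \<in> from_Sub\<^sup>+ \<or> (d, c) \<in> from_Sub\<^sup>+"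
      using cd(4) by (auto simp: rtrancl_eq_or_trancl)
    then have "v \<in> Sub"
      using cd(1,2) from_Sub_trancl_parent by blast
    with assms show False
      using norm_V_iff by blast
  qed
  then show ?thesis
    unfolding outdeg_def norm_children_eq[OF assms] by (rule card_image)
qed

lemma from_Sub_rtrancl_dominates: "(t, b) \<in> from_Sub\<^sup>* \<Longrightarrow> dominates t b"
proof (induction rule: converse_rtrancl_induct)
  case base
  show ?case by (rule dominates_refl)
next
  case (step t t')
  then have "dominates t t'"
    using sub_dominates_child by (auto simp: from_Sub_def)
  then show ?case
    using step.IH by (rule dominates_trans)
qed

lemma from_Sub_rtrancl_cases:
  "(t, b) \<in> from_Sub\<^sup>* \<Longrightarrow> v \<in> Vis \<Longrightarrow> (t, v) \<in> A\<^sup>* \<Longrightarrow> (v, b) \<in> from_Sub\<^sup>* \<or> (b, v) \<in> A\<^sup>*"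
proof (induction rule: converse_rtrancl_induct)
  case (step t t')
  show ?case
  proof (cases "t = v")
    case False
    with step.prems have "(t, v) \<in> A\<^sup>+"
      by (simp add: rtrancl_eq_or_trancl)
    with step.hyps(1) step.prems(1) have "(t', v) \<in> A\<^sup>*"
      using sub_child_below by (auto simp: from_Sub_def)
    with step.IH step.prems(1) show ?thesis by blast
  qed (use step.hyps in \<open>auto intro: converse_rtrancl_into_rtrancl\<close>)
qed simp

lemma norm_arc_no_between:
  assumes ab: "(a, b) \<in> An" and v: "v \<in> Vn" and av: "(a, v) \<in> A\<^sup>+" and vb: "(v, b) \<in> A\<^sup>+"
  shows False
proof -
  obtain t where at: "(a, t) \<in> Cov" and tb: "(t, b) \<in> from_Sub\<^sup>*"
    using ab unfolding norm_A_iff_from by blast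
  have vV: "v \<in> Vis" "v \<notin> Sub" "v \<in> V"
    using v norm_V_iff Vis_subset by auto
  have "(v, t) \<in> A\<^sup>* \<or> (t, v) \<in> A\<^sup>*"
    using dominates_comparable[OF from_Sub_rtrancl_dominates[OF tb] vV(3) trancl_into_rtrancl[OF vb]] .
  then show False
  proof
    assume "(v, t) \<in> A\<^sup>*"
    moreover have "v \<noteq> t"
      using tb vV(2) vb trancl_irrefl from_Sub_rtrancl_imp_eq by blast
    ultimately have "(v, t) \<in> A\<^sup>+"
      by (simp add: rtrancl_eq_or_trancl)
    then show False
      using cov_no_visible_between[OF at vV(1) av] by blast
  next
    assume "(t, v) \<in> A\<^sup>*"
    then have "(v, b) \<in> from_Sub\<^sup>* \<or> (b, v) \<in> A\<^sup>*"
      using tb vV(1) from_Sub_rtrancl_cases by blast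
    then show False
    proof
      assume "(v, b) \<in> from_Sub\<^sup>*"
      then have "v = b"
        using vV(2) from_Sub_rtrancl_imp_eq by blast
      with vb show False
        using trancl_irrefl by blast
    qed (use vb not_rtrancl_if_trancl in blast)
  qed
qed

lemma norm_arc_trancl:
  assumes "(a, b) \<in> An"
  shows "(a, b) \<in> A\<^sup>+"
proof -
  obtain m where "(a, m) \<in> into_Sub\<^sup>*" "(m, b) \<in> Cov"
    using assms unfolding norm_A_iff_into by blast
  then have "(a, m) \<in> A\<^sup>*" "(m, b) \<in> A\<^sup>+"
    using into_Sub_rtrancl_imp cov_rtrancl_imp_rtrancl covD by blast+
  then show ?thesis
    by (rule rtrancl_trancl_trancl)
qed

lemma norm_trancl_imp_trancl: "(a, b) \<in> An\<^sup>+ \<Longrightarrow> (a, b) \<in> A\<^sup>+"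
proof -
  assume "(a, b) \<in> An\<^sup>+"
  moreover have "An \<subseteq> A\<^sup>+"
    using norm_arc_trancl by auto
  ultimately show ?thesis
    using trancl_mono[of "(a, b)" An "A\<^sup>+"] by simp
qed

lemma cov_rtrancl_imp_norm:
  "(u, v) \<in> Cov\<^sup>* \<Longrightarrow> u \<in> Vn \<Longrightarrow> \<exists>w\<in>Vn. (u, w) \<in> An\<^sup>* \<and> (w, v) \<in> into_Sub\<^sup>*"
proof (induction rule: rtrancl_induct)
  case (step v v')
  then obtain w where w: "w \<in> Vn" "(u, w) \<in> An\<^sup>*" "(w, v) \<in> into_Sub\<^sup>*" by blast
  show ?case
  proof (cases "v' \<in> Sub")
    case True
    with step.hyps(2) w show ?thesis
      by (auto simp: into_Sub_def intro: rtrancl_into_rtrancl)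
  next
    case False
    then have "v' \<in> Vn"
      using step.hyps(2) covD norm_V_iff by blast
    with w step.hyps(2) have "(w, v') \<in> An"
      unfolding norm_A_iff_into by blast
    with w(2) \<open>v' \<in> Vn\<close> show ?thesis
      by (auto intro: rtrancl_into_rtrancl)
  qed
qed blast

lemma norm_rtrancl_iff: "u \<in> Vn \<Longrightarrow> v \<in> Vn \<Longrightarrow> (u, v) \<in> An\<^sup>* \<longleftrightarrow> (u, v) \<in> A\<^sup>*"
proof
  assume "(u, v) \<in> An\<^sup>*"
  then show "(u, v) \<in> A\<^sup>*"
    using norm_trancl_imp_trancl by (metis rtrancl_eq_or_trancl trancl_into_rtrancl)
next
  assume uv: "u \<in> Vn" "v \<in> Vn" "(u, v) \<in> A\<^sup>*"
  then have "(u, v) \<in> Cov\<^sup>*"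
    using cov_trancl_iff norm_V_iff by (metis rtrancl_eq_or_trancl trancl_into_rtrancl)
  then obtain w where "(u, w) \<in> An\<^sup>*" "(w, v) \<in> into_Sub\<^sup>*"
    using uv(1) cov_rtrancl_imp_norm by blast
  then show "(u, v) \<in> An\<^sup>*"
    using uv(2) norm_V_iff into_Sub_rtrancl_imp_eq by blast
qed

lemma leaves_norm: "X \<subseteq> Vn"
  using leaves_visible sub_not_leaf norm_V_iff by blast

lemma cluster_norm:
  assumes "v \<in> Vn"
  shows "cluster X An v = cluster X A v"
  unfolding cluster_def reach_iff_rtrancl
proof (rule Collect_cong)
  show "x \<in> X \<and> (v, x) \<in> An\<^sup>* \<longleftrightarrow> x \<in> X \<and> (v, x) \<in> A\<^sup>*" for x
    using norm_rtrancl_iff[OF assms, of x] leaves_norm by blast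
qed

lemma cluster_norm_image: "cluster X A ` Vis = cluster X A ` Vn"
proof
  have "Vn \<subseteq> Vis"
    using norm_V_iff by blast
  then show "cluster X A ` Vn \<subseteq> cluster X A ` Vis"
    by (rule image_mono)
  have "cluster X A a = cluster X A w" if "(a, w) \<in> from_Sub\<^sup>*" for a w
    using that
  proof (induction rule: converse_rtrancl_induct)
    case (step a a')
    then have "cluster X A a = cluster X A a'"
      using cluster_sub_child[of a a'] by (simp add: from_Sub_def)
    with step.IH show ?case by simp
  qed simp
  then have "cluster X A a \<in> cluster X A ` Vn" if "a \<in> Vis" for a
    using sub_end[OF that] by (metis imageI)
  then show "cluster X A ` Vis \<subseteq> cluster X A ` Vn"
    by blast
qed

section \<open>The normalisation is normal\<close>

lemma norm_A_subset: "An \<subseteq> Vn \<times> Vn"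
  using norm_A_iff_into by auto

lemma finite_norm_V: "finite Vn"
  using finite_V Vis_subset norm_V_iff by (meson finite_subset subsetI)

lemma root_norm_V: "\<rho> \<in> Vn"
  using root_visible sub_not_root norm_V_iff by blast

lemma indeg_norm_eq_0_iff: "v \<in> Vn \<Longrightarrow> indeg An v = 0 \<longleftrightarrow> v = \<rho>"
  using indeg_norm indeg_eq_0_iff[OF finite_Cov] no_cov_to_root cov_parent_exists norm_V_iff
  by metis

lemma root_norm: "root Vn An = \<rho>"
  unfolding root_def[of Vn An]
  by (rule the_equality) (use root_norm_V indeg_norm_eq_0_iff in auto)

lemma leaves_norm_eq: "X = {v \<in> Vn. indeg An v = 1 \<and> outdeg An v = 0}"
proof (intro equalityI subsetI)
  fix x assume "x \<in> X"
  then show "x \<in> {v \<in> Vn. indeg An v = 1 \<and> outdeg An v = 0}"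
    using leaves_norm cov_degrees_leaf indeg_norm outdeg_norm by auto
next
  fix v assume "v \<in> {v \<in> Vn. indeg An v = 1 \<and> outdeg An v = 0}"
  then have v: "v \<in> Vn" "indeg Cov v = 1" "outdeg Cov v = 0"
    using indeg_norm outdeg_norm by auto
  show "v \<in> X"
  proof (rule ccontr)
    assume "v \<notin> X"
    moreover have "v \<noteq> \<rho>"
      using v(2) indeg_cov_root by auto
    ultimately obtain c where "(v, c) \<in> Cov"
      using v(1) norm_V_iff cov_child_exists by blast
    with v(3) show False
      using outdeg_eq_0_iff[OF finite_Cov] by blast
  qed
qed

lemma degree_cases_norm:
  assumes v: "v \<in> Vn" and "indeg An v \<noteq> 0"
  shows "(indeg An v = 1 \<and> outdeg An v = 0) \<or> (indeg An v = 1 \<and> 2 \<le> outdeg An v) \<or>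
    (outdeg An v = 1 \<and> 2 \<le> indeg An v)"
proof (cases "v \<in> X")
  case True
  then show ?thesis
    using leaves_norm_eq by blast
next
  case False
  have vV: "v \<in> Vis" "v \<notin> Sub" "v \<noteq> \<rho>"
    using v assms(2) norm_V_iff indeg_norm_eq_0_iff by auto
  then obtain c where "(v, c) \<in> Cov"
    using False cov_child_exists by blast
  then have "outdeg Cov v \<noteq> 0"
    using outdeg_eq_0_iff[OF finite_Cov] by blast
  moreover have "indeg Cov v \<noteq> 0"
    using assms(2) indeg_norm[OF v] by simp
  moreover have "indeg Cov v = 1 \<or> outdeg Cov v = 1"
    using vV False cov_degree_cases by blast
  moreover have "\<not> (indeg Cov v = 1 \<and> outdeg Cov v = 1)"
    using vV(2) by (simp add: subdividing_def)
  ultimately show ?thesis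
    using indeg_norm[OF v] outdeg_norm[OF v] by auto
qed

lemma phylo_network_norm: "phylo_network X Vn An"
  unfolding phylo_network_def
proof (intro conjI allI impI ballI)
  show "\<exists>!r. r \<in> Vn \<and> indeg An r = 0"
    using root_norm_V indeg_norm_eq_0_iff by blast
  fix v p assume p: "is_path An p v v"
  have "\<not> 2 \<le> length p"
    using p trancl_iff_is_path[of v v An] norm_trancl_imp_trancl trancl_irrefl by blast
  moreover have "length p \<noteq> 0"
    using p by auto
  ultimately show "length p = 1"
    by linarith
qed (use finite_norm_V norm_A_subset degree_cases_norm leaves_norm_eq in auto)

lemma norm_arc_avoiding:
  assumes "v \<in> Vn" "(s, t) \<in> avoiding An v"
  shows "(s, t) \<in> (avoiding A v)\<^sup>*"
proof (rule rtrancl_avoidingI)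
  have st: "(s, t) \<in> An" "s \<noteq> v" "t \<noteq> v"
    using assms(2) by (auto simp: avoiding_def)
  then show "(s, t) \<in> A\<^sup>*"
    using trancl_into_rtrancl[OF norm_arc_trancl] by blast
  show "\<not> ((s, v) \<in> A\<^sup>* \<and> (v, t) \<in> A\<^sup>*)"
    using st norm_arc_no_between[OF st(1) assms(1)] by (auto simp: rtrancl_eq_or_trancl)
qed

lemma tree_child_norm: "tree_child X Vn An"
  unfolding tree_child_def visible_def root_norm
proof (intro ballI)
  fix v assume v: "v \<in> Vn"
  show "v \<in> Vn \<and> (v = \<rho> \<or> v \<in> X \<or> (\<exists>x\<in>X. \<forall>p. is_path An p \<rho> x \<longrightarrow> v \<in> set p))"
  proof (cases "v = \<rho> \<or> v \<in> X")
    case False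
    obtain x where x: "x \<in> X" "dominates v x"
      using v False norm_V_iff visible_iff by blast
    have "v \<in> set p" if "is_path An p \<rho> x" for p
    proof (rule ccontr)
      assume "v \<notin> set p"
      with that False have "(\<rho>, x) \<in> (avoiding An v)\<^sup>*"
        using avoiding_rtrancl_iff by metis
      moreover have "avoiding An v \<subseteq> (avoiding A v)\<^sup>*"
        using norm_arc_avoiding[OF v] by (intro subrelI)
      ultimately have "(\<rho>, x) \<in> (avoiding A v)\<^sup>*"
        using rtrancl_subset_rtrancl by blast
      with x(2) False show False
        using dominates_iff_avoiding by simp
    qed
    with v x(1) show ?thesis by blast
  qed (use v in blast)
qed

lemma no_shortcut_norm: "\<not> shortcut An u v"
proof
  assume "shortcut An u v"
  then obtain w where "(u, v) \<in> An" "(u, w) \<in> An" "(w, v) \<in> An\<^sup>+"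
    unfolding shortcut_iff by blast
  then show False
    using norm_A_subset norm_arc_trancl norm_trancl_imp_trancl norm_arc_no_between by blast
qed

lemma normal_norm: "normal X Vn An"
  unfolding normal_def using phylo_network_norm tree_child_norm no_shortcut_norm by blast

section \<open>Normal networks and trees\<close>

lemma cov_subset_if_all_visible:
  assumes "Vis = V"
  shows "Cov \<subseteq> A"
proof (rule subrelI)
  fix u v assume uv: "(u, v) \<in> Cov"
  then obtain z where "(u, z) \<in> A" "(z, v) \<in> A\<^sup>*"
    using covD by (meson tranclD)
  moreover have "z = v"
  proof (rule ccontr)
    assume "z \<noteq> v"
    with \<open>(z, v) \<in> A\<^sup>*\<close> have "(z, v) \<in> A\<^sup>+"
      by (simp add: rtrancl_eq_or_trancl)
    moreover have "z \<in> Vis"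
      using \<open>(u, z) \<in> A\<close> arc_in_V assms by blast
    ultimately show False
      using cov_no_visible_between[OF uv] \<open>(u, z) \<in> A\<close> by blast
  qed
  ultimately show "(u, v) \<in> A" by simp
qed

lemma arcs_subset_cov_if_no_shortcut:
  assumes "Vis = V" "\<And>u v. \<not> shortcut A u v"
  shows "A \<subseteq> Cov"
proof (rule subrelI)
  fix u v assume uv: "(u, v) \<in> A"
  have "\<not> (\<exists>w. (u, w) \<in> A\<^sup>+ \<and> (w, v) \<in> A\<^sup>+)"
  proof
    assume "\<exists>w. (u, w) \<in> A\<^sup>+ \<and> (w, v) \<in> A\<^sup>+"
    then obtain w z where "(u, z) \<in> A" "(z, w) \<in> A\<^sup>*" "(w, v) \<in> A\<^sup>+"
      by (meson tranclD)
    then have "shortcut A u v"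
      unfolding shortcut_iff using uv by (meson relcompI rtrancl_trancl_trancl)
    with assms(2) show False by blast
  qed
  with uv assms(1) show "(u, v) \<in> Cov"
    unfolding cov_iff using arc_in_V by blast
qed

lemma normal_iff_cov_eq: "normal X V A \<longleftrightarrow> Vis = V \<and> Cov = A"
proof
  assume "normal X V A"
  then have "Vis = V" "\<And>u v. \<not> shortcut A u v"
    using Vis_subset unfolding normal_def tree_child_def Vvis_def by auto
  then show "Vis = V \<and> Cov = A"
    using cov_subset_if_all_visible arcs_subset_cov_if_no_shortcut by blast
next
  assume eq: "Vis = V \<and> Cov = A"
  then have "tree_child X V A"
    unfolding tree_child_def Vvis_def by blast
  moreover have "\<not> shortcut A u v" for u v
    using eq hasse_diagram_no_shortcut[OF trans_vis_less] cov_eq by metis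
  ultimately show "normal X V A"
    unfolding normal_def using phylo_network by blast
qed

lemma norm_eq_cov_if_no_sub:
  assumes "Sub = {}"
  shows "Vn = Vis" "An = Cov"
proof -
  show "Vn = Vis"
    using assms norm_V_iff by blast
  have "into_Sub = {}"
    using assms by (auto simp: into_Sub_def)
  then show "An = Cov"
    using norm_A_iff_into \<open>Vn = Vis\<close> covD by auto
qed

lemma no_sub_if_cov_eq:
  assumes "Cov = A"
  shows "Sub = {}"
proof (rule ccontr)
  assume "Sub \<noteq> {}"
  then obtain s where s: "s \<in> Sub" by blast
  then have "s \<in> V" "indeg A s = 1" "outdeg A s = 1"
    using sub_visible Vis_subset assms by (auto simp: subdividing_def)
  then show False
    using degree_cases by fastforce
qed

lemma norm_eq_if_normal:
  assumes "normal X V A"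
  shows "Vn = V" "An = A"
  using assms norm_eq_cov_if_no_sub no_sub_if_cov_eq normal_iff_cov_eq by auto

lemma normal_if_iso_norm:
  assumes "iso_fix X Vn An V A"
  shows "normal X V A"
proof -
  have card: "card Vn = card V" "card An = card A"
    using iso_fix_card[OF assms norm_A_subset arcs_subset] by auto
  have "Vn \<subseteq> V"
    using norm_V_iff Vis_subset by blast
  then have "Vn = V"
    using card(1) finite_V by (simp add: card_subset_eq)
  then have "Vis = V" "Sub = {}"
    using norm_V_iff Vis_subset sub_visible by blast+
  then have "An = Cov" "Cov \<subseteq> A"
    using norm_eq_cov_if_no_sub cov_subset_if_all_visible by blast+
  then have "Cov = A"
    using card(2) finite_A by (metis card_subset_eq)
  with \<open>Vis = V\<close> show ?thesis
    using normal_iff_cov_eq by blast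
qed

lemma tree_imp_hierarchy:
  assumes "is_tree V A"
  shows "hierarchy (cluster X A ` V)"
proof -
  have "single_valued (A\<inverse>)"
  proof (rule single_valuedI, rule ccontr)
    fix z a b assume "(z, a) \<in> A\<inverse>" "(z, b) \<in> A\<inverse>" "a \<noteq> b"
    then have "z \<in> V" "2 \<le> indeg A z"
      using arc_in_V indeg_ge_2_iff[OF finite_A] by auto
    then have "reticulate V A z"
      unfolding reticulate_def using degree_cases by fastforce
    with assms \<open>z \<in> V\<close> show False
      unfolding is_tree_def by blast
  qed
  have "S \<inter> T = {} \<or> S \<subseteq> T \<or> T \<subseteq> S" if "S = cluster X A u" "T = cluster X A w" for S T u w
  proof (cases "S \<inter> T = {}")
    case False
    then obtain x where "x \<in> S" "x \<in> T" by blast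
    then have "(u, x) \<in> A\<^sup>*" "(w, x) \<in> A\<^sup>*"
      using that by (simp_all add: cluster_def reach_iff_rtrancl)
    then have "(u, w) \<in> A\<^sup>* \<or> (w, u) \<in> A\<^sup>*"
      using single_valued_confluent[OF \<open>single_valued (A\<inverse>)\<close>, of x w u]
      by (auto simp: rtrancl_converse)
    then show ?thesis
      unfolding that cluster_def reach_iff_rtrancl by (auto intro: rtrancl_trans)
  qed simp
  then show ?thesis
    unfolding hierarchy_def by blast
qed

lemma parents_incomparable_if_no_shortcut:
  assumes "\<And>u v. \<not> shortcut A u v" "(a, z) \<in> A" "(b, z) \<in> A" "(a, b) \<in> A\<^sup>+"
  shows False
proof -
  obtain w where "(a, w) \<in> A" "(w, b) \<in> A\<^sup>*"
    using tranclD[OF assms(4)] by blast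
  with assms(3) have "(a, z) \<in> A O A\<^sup>+"
    by (meson relcompI rtrancl_into_trancl1)
  with assms(1,2) show False
    unfolding shortcut_iff by blast
qed

lemma private_leaf_if_incomparable:
  assumes tc: "tree_child X V A" and az: "(a, z) \<in> A" and bV: "b \<in> V"
    and incomp: "(a, b) \<notin> A\<^sup>*" "(b, a) \<notin> A\<^sup>*"
  shows "\<exists>x\<in>cluster X A a. x \<notin> cluster X A b"
proof -
  have "a \<in> Vis" "a \<noteq> \<rho>" "a \<notin> X"
    using tc az bV incomp(1) arc_in_V root_reaches no_arc_from_leaf
    unfolding tree_child_def Vvis_def by blast+
  then obtain x where "x \<in> X" "dominates a x"
    using visible_iff by blast
  then have "x \<in> cluster X A a" "x \<notin> cluster X A b"
    using bV incomp dominates_imp_rtrancl dominates_comparable leaves_subset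
    unfolding cluster_def reach_iff_rtrancl by blast+
  then show ?thesis by blast
qed

lemma hierarchy_imp_tree:
  assumes "normal X V A" and hier: "hierarchy (cluster X A ` V)"
  shows "is_tree V A"
  unfolding is_tree_def
proof (intro ballI notI)
  fix z assume "z \<in> V" "reticulate V A z"
  then obtain a b where ab: "a \<noteq> b" "(a, z) \<in> A" "(b, z) \<in> A"
    unfolding reticulate_def using indeg_ge_2_iff[OF finite_A] by blast
  have tc: "tree_child X V A" and no_sc: "\<And>u v. \<not> shortcut A u v"
    using assms(1) unfolding normal_def by auto
  have incomp: "(a, b) \<notin> A\<^sup>*" "(b, a) \<notin> A\<^sup>*"
    using ab parents_incomparable_if_no_shortcut[OF no_sc] by (metis rtrancl_eq_or_trancl)+
  have "a \<in> V" "b \<in> V"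
    using ab arc_in_V by auto
  obtain y where "y \<in> X" "(z, y) \<in> A\<^sup>*"
    using reaches_leaf \<open>z \<in> V\<close> ab(2) no_arc_to_root by blast
  then have "y \<in> cluster X A a \<inter> cluster X A b"
    using ab unfolding cluster_def reach_iff_rtrancl by (auto intro: converse_rtrancl_into_rtrancl)
  moreover have "cluster X A a \<in> cluster X A ` V" "cluster X A b \<in> cluster X A ` V"
    using \<open>a \<in> V\<close> \<open>b \<in> V\<close> by blast+
  ultimately show False
    using hier private_leaf_if_incomparable[OF tc ab(2) \<open>b \<in> V\<close> incomp]
      private_leaf_if_incomparable[OF tc ab(3) \<open>a \<in> V\<close> incomp(2,1)]
    unfolding hierarchy_def by blast
qed

end

theorem theorem1:
  fixes X V :: "'v set" and A :: "('v \<times> 'v) set"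
  assumes "finite X" and "phylo_network X V A"
  shows "normal X (norm_V X V A) (norm_A X V A)
    \<and> (iso_fix X (norm_V X V A) (norm_A X V A) V A \<longleftrightarrow> normal X V A)
    \<and> iso_fix X (norm_V X (norm_V X V A) (norm_A X V A)) (norm_A X (norm_V X V A) (norm_A X V A))
                 (norm_V X V A) (norm_A X V A)
    \<and> (\<forall>u\<in>norm_V X V A. \<forall>v\<in>norm_V X V A. reach (norm_A X V A) u v \<longleftrightarrow> reach A u v)
    \<and> (\<forall>v\<in>norm_V X V A. cluster X (norm_A X V A) v = cluster X A v)
    \<and> (is_tree (norm_V X V A) (norm_A X V A) \<longleftrightarrow> hierarchy (cluster X A ` Vvis X V A))"
proof -
  interpret N: phylo_net X V A
    using assms(2) by unfold_locales
  have normal: "normal X N.Vn N.An"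
    by (rule N.normal_norm)
  interpret Nnorm: phylo_net X N.Vn N.An
    using N.phylo_network_norm by unfold_locales
  have "iso_fix X N.Vn N.An V A \<longleftrightarrow> normal X V A"
    using N.normal_if_iso_norm N.norm_eq_if_normal iso_fix_refl by metis
  moreover have "norm_V X N.Vn N.An = N.Vn" "norm_A X N.Vn N.An = N.An"
    using Nnorm.norm_eq_if_normal[OF normal] by auto
  moreover have "cluster X N.An ` N.Vn = cluster X A ` N.Vis"
    using N.cluster_norm N.cluster_norm_image by (metis image_cong)
  then have "is_tree N.Vn N.An \<longleftrightarrow> hierarchy (cluster X A ` N.Vis)"
    using Nnorm.tree_imp_hierarchy Nnorm.hierarchy_imp_tree[OF normal] by metis
  ultimately show ?thesis
    using normal iso_fix_refl N.norm_rtrancl_iff N.cluster_norm by (simp add: reach_iff_rtrancl)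
qed

end
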